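(* Let $\{P^{[s,t]}_{ij,k}\}$, with initial point $x^{(0)}\in S$, be a discrete time quadratic stochastic process of type (A) or of type (B). For $x\in S$ and $m<n$ let $R^{m,n}_{ij}(x)=\sum_{l=1}^\infty P^{[m,n]}_{il,j}x_l$. The following are equivalent: (i) the q.s.p. satisfies the ergodic principle, i.e. $\lim_{n\to\infty}|P^{[m,n]}_{ij,k}-P^{[m,n]}_{uv,k}|=0$ for all $i,j,u,v,k,m\in\mathbb{N}$; (ii) for every $x\in S$ and every $i,j,k,m\in\mathbb{N}$, $\lim_{n\to\infty}|R^{m,n}_{ik}(x)-R^{m,n}_{jk}(x)|=0$.
   Context: $\mathbb{N}=\{1,2,\dots\}$; times are nonnegative integers. $\ell^1$ is the space of real sequences $x=(x_n)_{n\in\mathbb{N}}$ with $\|x\|_1=\sum_n|x_n|<\infty$, and $S=\{x\in\ell^1:x_n\ge0,\ \|x\|_1=1\}$. A discrete time quadratic stochastic process (q.s.p.) consists of an initial point $x^{(0)}\in S$ and numbers $P^{[s,t]}_{ij,k}$ ($i,j,k\in\mathbb{N}$; $s,t$ nonnegative integers with $t-s\ge1$) such that for all $s,t$: (1) $P^{[s,t]}_{ij,k}=P^{[s,t]}_{ji,k}$; (2) $P^{[s,t]}_{ij,k}\ge0$ and $\sum_{k}P^{[s,t]}_{ij,k}=1$; and (3) one of the following holds for all $s<r<t$: type (A): $P^{[s,t]}_{ij,k}=\sum_{m,l}P^{[s,r]}_{ij,m}P^{[r,t]}_{ml,k}x^{(r)}_l$; type (B): $P^{[s,t]}_{ij,k}=\sum_{m,l,g,h}P^{[s,r]}_{im,l}P^{[s,r]}_{jg,h}P^{[r,t]}_{lh,k}x^{(s)}_mx^{(s)}_g$.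 Here for $r\ge1$, $x^{(r)}_k=\sum_{i,j}P^{[0,r]}_{ij,k}x^{(0)}_ix^{(0)}_j$. *)

theory Defs
  imports "HOL-Analysis.Analysis"
begin

text \<open>Conventions: states (elements of the paper's index set N = {1,2,...}) are natural
numbers \<open>\<ge> 1\<close>; the value at index 0 is never used.
The family P^{[s,t]}_{ij,k} is encoded as \<open>P s t i j k\<close>; its values for \<open>t \<le> s\<close> are irrelevant.\<close>

definition stoch_S :: "(nat \<Rightarrow> real) set" where
  "stoch_S = {x. (\<forall>n\<ge>1. 0 \<le> x n) \<and> (x has_sum 1) (atLeast 1)}"

definition traj :: "(nat \<Rightarrow> nat \<Rightarrow> nat \<Rightarrow> nat \<Rightarrow> nat \<Rightarrow> real) \<Rightarrow> (nat \<Rightarrow> real) \<Rightarrow> nat \<Rightarrow> nat \<Rightarrow> real" where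
  "traj P x0 r k = (if r = 0 then x0 k
     else (\<Sum>\<^sub>\<infinity>(i,j)\<in>(atLeast 1)\<times>(atLeast 1). P 0 r i j k * x0 i * x0 j))"

definition qsp_base :: "(nat \<Rightarrow> nat \<Rightarrow> nat \<Rightarrow> nat \<Rightarrow> nat \<Rightarrow> real) \<Rightarrow> (nat \<Rightarrow> real) \<Rightarrow> bool" where
  "qsp_base P x0 \<longleftrightarrow> x0 \<in> stoch_S \<and>
     (\<forall>s t i j k. s < t \<and> 1 \<le> i \<and> 1 \<le> j \<and> 1 \<le> k \<longrightarrow>
        P s t i j k = P s t j i k \<and> 0 \<le> P s t i j k) \<and>
     (\<forall>s t i j. s < t \<and> 1 \<le> i \<and> 1 \<le> j \<longrightarrow> ((\<lambda>k. P s t i j k) has_sum 1) (atLeast 1))"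

definition qsp_typeA :: "(nat \<Rightarrow> nat \<Rightarrow> nat \<Rightarrow> nat \<Rightarrow> nat \<Rightarrow> real) \<Rightarrow> (nat \<Rightarrow> real) \<Rightarrow> bool" where
  "qsp_typeA P x0 \<longleftrightarrow>
     (\<forall>s r t i j k. s < r \<and> r < t \<and> 1 \<le> i \<and> 1 \<le> j \<and> 1 \<le> k \<longrightarrow>
        ((\<lambda>(m,l). P s r i j m * P r t m l k * traj P x0 r l) has_sum P s t i j k)
          ((atLeast 1) \<times> (atLeast 1)))"

definition qsp_typeB :: "(nat \<Rightarrow> nat \<Rightarrow> nat \<Rightarrow> nat \<Rightarrow> nat \<Rightarrow> real) \<Rightarrow> (nat \<Rightarrow> real) \<Rightarrow> bool" where
  "qsp_typeB P x0 \<longleftrightarrow>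
     (\<forall>s r t i j k. s < r \<and> r < t \<and> 1 \<le> i \<and> 1 \<le> j \<and> 1 \<le> k \<longrightarrow>
        ((\<lambda>(m,l,g,h). P s r i m l * P s r j g h * P r t l h k * traj P x0 s m * traj P x0 s g)
           has_sum P s t i j k) ((atLeast 1) \<times> (atLeast 1) \<times> (atLeast 1) \<times> (atLeast 1)))"

definition Rmat :: "(nat \<Rightarrow> nat \<Rightarrow> nat \<Rightarrow> nat \<Rightarrow> nat \<Rightarrow> real) \<Rightarrow> nat \<Rightarrow> nat \<Rightarrow> nat \<Rightarrow> nat \<Rightarrow> (nat \<Rightarrow> real) \<Rightarrow> real" where
  "Rmat P m n i j x = (\<Sum>\<^sub>\<infinity>l\<in>(atLeast 1). P m n i l j * x l)"

end

theory Submission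
  imports Defs
begin

text \<open>If the ergodic principle holds, then
\<open>Rmat P m n i k x - Rmat P m n j k x = (\<Sum>\<^sub>\<infinity>l\<in>{1..}. (P m n i l k - P m n j l k) * x l)\<close> is a series
whose terms tend to \<open>0\<close> and are dominated by the summable \<open>x l\<close>, so it tends to \<open>0\<close> by
Tannery's theorem.  Conversely, (ii) for the point mass \<open>x = indicator {v}\<close> says
\<open>P m n i v k - P m n j v k \<longlonglongrightarrow> 0\<close>; changing the two lower indices one at a time, with
symmetry in between, connects \<open>(i, j)\<close> to \<open>(u, v)\<close>.\<close>

lemma has_sum_nonneg_term_le:
  fixes f :: "'a \<Rightarrow> real"
  assumes "(f has_sum s) A" "\<And>x. x \<in> A \<Longrightarrow> 0 \<le> f x" "a \<in> A"
  shows "f a \<le> s"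
  by (rule has_sum_mono_neutral[OF has_sum_finiteI[of "{a}"] assms(1)]) (use assms in auto)

lemma has_sum_mult_indicator_singleton:
  fixes f :: "'a \<Rightarrow> real"
  assumes "a \<in> A"
  shows "((\<lambda>x. f x * indicator {a} x) has_sum f a) A"
  by (rule has_sum_cong_neutral[THEN iffD1, OF _ _ _ has_sum_finiteI[of "{a}"]])
    (use assms in auto)

lemma has_sum_tendsto_0_dominated:
  fixes g :: "'b \<Rightarrow> nat \<Rightarrow> real"
  assumes sums: "\<forall>\<^sub>F n in F. (g n has_sum S n) A"
    and bound: "\<forall>\<^sub>F n in F. \<forall>l\<in>A. \<bar>g n l\<bar> \<le> M l"
    and M: "M summable_on A"
    and lim: "\<And>l. l \<in> A \<Longrightarrow> ((\<lambda>n. g n l) \<longlongrightarrow> 0) F"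
  shows "(S \<longlongrightarrow> 0) F"
proof (cases "F = bot")
  case False
  define G where "G l n = (if l \<in> A then g n l else 0)" for l n
  define B where "B l = (if l \<in> A then M l else 0)" for l
  have "B summable_on UNIV"
    using M summable_on_cong_neutral[of UNIV A B M] by (simp add: B_def)
  then have "summable B"
    by (rule summable_on_imp_summable)
  moreover have "eventually (\<lambda>(l, n). norm (G l n) \<le> B l) (at_top \<times>\<^sub>F F)"
    using bound unfolding eventually_prod_filter
    by (intro exI[of _ "\<lambda>_. True"] exI[of _ "\<lambda>n. \<forall>l\<in>A. \<bar>g n l\<bar> \<le> M l"])
      (auto simp: G_def B_def)
  moreover have "((\<lambda>n. G l n) \<longlongrightarrow> 0) F" for l
    using lim by (cases "l \<in> A") (simp_all add: G_def)
  ultimately have "((\<lambda>n. suminf (\<lambda>l. G l n)) \<longlongrightarrow> suminf (\<lambda>_. 0 :: real)) F"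
    using tannerys_theorem[of G "\<lambda>_. 0" F B] False by blast
  moreover have "\<forall>\<^sub>F n in F. suminf (\<lambda>l. G l n) = S n"
    using sums
  proof eventually_elim
    case (elim n)
    then have "((\<lambda>l. G l n) has_sum S n) UNIV"
      using has_sum_cong_neutral[of UNIV A "\<lambda>l. G l n" "g n"] by (simp add: G_def)
    then show ?case
      by (metis has_sum_imp_sums sums_unique)
  qed
  ultimately show ?thesis
    by (simp add: tendsto_cong)
qed simp

lemma qsp_base_kernel_bounds:
  assumes "qsp_base P x0" "s < t" "1 \<le> i" "1 \<le> j" "1 \<le> k"
  shows "0 \<le> P s t i j k" "P s t i j k \<le> 1"
proof -
  have nonneg: "\<And>k. k \<in> {1..} \<Longrightarrow> 0 \<le> P s t i j k"
    using assms unfolding qsp_base_def by auto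
  then show "0 \<le> P s t i j k"
    using assms(5) by simp
  show "P s t i j k \<le> 1"
    by (rule has_sum_nonneg_term_le[where A="{1..}", OF _ nonneg])
      (use assms in \<open>auto simp: qsp_base_def\<close>)
qed

lemma qsp_base_kernel_sym:
  assumes "qsp_base P x0" "s < t" "1 \<le> i" "1 \<le> j" "1 \<le> k"
  shows "P s t i j k = P s t j i k"
  using assms unfolding qsp_base_def by blast

lemma stoch_S_indicator: "1 \<le> v \<Longrightarrow> indicator {v} \<in> stoch_S"
  using has_sum_mult_indicator_singleton[of v "{1..}" "\<lambda>_. 1"] by (simp add: stoch_S_def)

lemma Rmat_indicator: "1 \<le> v \<Longrightarrow> Rmat P m n i k (indicator {v}) = P m n i v k"
  unfolding Rmat_def by (rule infsumI[OF has_sum_mult_indicator_singleton]) simp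

lemma has_sum_Rmat:
  assumes "qsp_base P x0" "x \<in> stoch_S" "m < n" "1 \<le> i" "1 \<le> k"
  shows "((\<lambda>l. P m n i l k * x l) has_sum Rmat P m n i k x) {1..}"
proof -
  have "x summable_on {1..}"
    using assms(2) by (auto simp: stoch_S_def summable_on_def)
  then have "(\<lambda>l. P m n i l k * x l) summable_on {1..}"
    by (rule summable_on_comparison_test)
      (use assms qsp_base_kernel_bounds[OF assms(1)] in
        \<open>auto simp: stoch_S_def intro: mult_left_le_one_le mult_nonneg_nonneg\<close>)
  then show ?thesis
    unfolding Rmat_def by (rule has_sum_infsum)
qed

lemma ergodic_imp_Rmat_diff_tendsto_0:
  assumes base: "qsp_base P x0" and x: "x \<in> stoch_S"
    and ergodic: "\<And>l. 1 \<le> l \<Longrightarrow> (\<lambda>n. P m n i l k - P m n j l k) \<longlonglongrightarrow> 0"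
    and "1 \<le> i" "1 \<le> j" "1 \<le> k"
  shows "(\<lambda>n. Rmat P m n i k x - Rmat P m n j k x) \<longlonglongrightarrow> 0"
proof (rule has_sum_tendsto_0_dominated)
  have x_nonneg: "\<And>l. 1 \<le> l \<Longrightarrow> 0 \<le> x l"
    using x by (simp add: stoch_S_def)
  show "x summable_on {1..}"
    using x by (auto simp: stoch_S_def summable_on_def)
  show "\<forall>\<^sub>F n in sequentially.
      ((\<lambda>l. (P m n i l k - P m n j l k) * x l) has_sum Rmat P m n i k x - Rmat P m n j k x) {1..}"
    using eventually_gt_at_top[of m]
  proof eventually_elim
    case (elim n)
    show ?case
      using has_sum_add[OF has_sum_Rmat[OF base x elim] has_sum_uminusI[OF has_sum_Rmat[OF base x elim]],
          of i k j k] assms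
      by (simp add: left_diff_distrib)
  qed
  show "\<forall>\<^sub>F n in sequentially. \<forall>l\<in>{1..}. \<bar>(P m n i l k - P m n j l k) * x l\<bar> \<le> x l"
    using eventually_gt_at_top[of m]
  proof eventually_elim
    case (elim n)
    have "\<bar>P m n i l k - P m n j l k\<bar> \<le> 1" if "1 \<le> l" for l
      using qsp_base_kernel_bounds[OF base elim, of i l k] qsp_base_kernel_bounds[OF base elim, of j l k]
        that assms by auto
    then show ?case
      using x_nonneg by (auto simp: abs_mult intro: mult_left_le_one_le)
  qed
  show "(\<lambda>n. (P m n i l k - P m n j l k) * x l) \<longlonglongrightarrow> 0" if "l \<in> {1..}" for l
    using that by (intro tendsto_mult_left_zero ergodic) simp
qed

lemma Rmat_diff_tendsto_0_imp_ergodic: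
  assumes base: "qsp_base P x0"
    and R: "\<And>x i j. x \<in> stoch_S \<Longrightarrow> 1 \<le> i \<Longrightarrow> 1 \<le> j \<Longrightarrow>
      (\<lambda>n. Rmat P m n i k x - Rmat P m n j k x) \<longlonglongrightarrow> 0"
    and "1 \<le> i" "1 \<le> j" "1 \<le> u" "1 \<le> v" "1 \<le> k"
  shows "(\<lambda>n. P m n i j k - P m n u v k) \<longlonglongrightarrow> 0"
proof -
  have first_index: "(\<lambda>n. P m n a c k - P m n b c k) \<longlonglongrightarrow> 0"
    if "1 \<le> a" "1 \<le> b" "1 \<le> c" for a b c
    using R[OF stoch_S_indicator[OF \<open>1 \<le> c\<close>] that(1,2)] unfolding Rmat_indicator[OF that(3)] .
  have "(\<lambda>n. (P m n i j k - P m n u j k) + (P m n j u k - P m n v u k)) \<longlonglongrightarrow> 0"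
    using tendsto_add[OF first_index first_index] assms by simp
  moreover have "\<forall>\<^sub>F n in sequentially.
      (P m n i j k - P m n u j k) + (P m n j u k - P m n v u k) = P m n i j k - P m n u v k"
    using eventually_gt_at_top[of m]
    by eventually_elim (use qsp_base_kernel_sym[OF base] assms in simp)
  ultimately show ?thesis
    by (rule Lim_transform_eventually)
qed

theorem proposition2p5:
  fixes P :: "nat \<Rightarrow> nat \<Rightarrow> nat \<Rightarrow> nat \<Rightarrow> nat \<Rightarrow> real" and x0 :: "nat \<Rightarrow> real"
  assumes "qsp_base P x0"
    and "qsp_typeA P x0 \<or> qsp_typeB P x0"
  shows "(\<forall>i j u v k m. 1 \<le> i \<and> 1 \<le> j \<and> 1 \<le> u \<and> 1 \<le> v \<and> 1 \<le> k \<and> 1 \<le> m \<longrightarrow>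
            (\<lambda>n. \<bar>P m n i j k - P m n u v k\<bar>) \<longlonglongrightarrow> 0)
     \<longleftrightarrow> (\<forall>x\<in>stoch_S. \<forall>i j k m. 1 \<le> i \<and> 1 \<le> j \<and> 1 \<le> k \<and> 1 \<le> m \<longrightarrow>
            (\<lambda>n. \<bar>Rmat P m n i k x - Rmat P m n j k x\<bar>) \<longlonglongrightarrow> 0)"
  unfolding tendsto_rabs_zero_iff
proof (intro iffI ballI allI impI)
  fix x :: "nat \<Rightarrow> real" and i j k m :: nat
  assume "\<forall>i j u v k m. 1 \<le> i \<and> 1 \<le> j \<and> 1 \<le> u \<and> 1 \<le> v \<and> 1 \<le> k \<and> 1 \<le> m \<longrightarrow>
      (\<lambda>n. P m n i j k - P m n u v k) \<longlonglongrightarrow> 0"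
    and "x \<in> stoch_S" and "1 \<le> i \<and> 1 \<le> j \<and> 1 \<le> k \<and> 1 \<le> m"
  then show "(\<lambda>n. Rmat P m n i k x - Rmat P m n j k x) \<longlonglongrightarrow> 0"
    by (intro ergodic_imp_Rmat_diff_tendsto_0[OF assms(1)]) simp_all
next
  fix i j u v k m :: nat
  assume "\<forall>x\<in>stoch_S. \<forall>i j k m. 1 \<le> i \<and> 1 \<le> j \<and> 1 \<le> k \<and> 1 \<le> m \<longrightarrow>
      (\<lambda>n. Rmat P m n i k x - Rmat P m n j k x) \<longlonglongrightarrow> 0"
    and "1 \<le> i \<and> 1 \<le> j \<and> 1 \<le> u \<and> 1 \<le> v \<and> 1 \<le> k \<and> 1 \<le> m"
  then show "(\<lambda>n. P m n i j k - P m n u v k) \<longlonglongrightarrow> 0"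
    by (intro Rmat_diff_tendsto_0_imp_ergodic[OF assms(1)]) simp_all
qed

end
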